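(* Fix $\varepsilon>0$, $\beta\in(0,1)$, an even integer $d>4(e^{2\varepsilon}-1)^2\ln\frac2\beta$, and $\varepsilon$-private randomizers $R_1,\dots,R_n:[d]\to\mathcal Y$. Let $v=(e^{2\varepsilon}-1)\sqrt{\frac4d\ln\frac2\beta}$. If $H$ is chosen uniformly among subsets of $[d]$ of size $d/2$, then with probability at least $5/6$ over $H$, \[ \forall i\in[n]:\quad \Pr\left[R_i(\mathbf U)\in \mathit{Leak}(v,H,R_i)\right]<6\beta n . \]
   Context: $\mathcal Y$ is a countable message set. A randomizer $R:[d]\to\mathcal Y$ is $\varepsilon$-private if for all $x,x'\in[d]$ and all $Y\subseteq\mathcal Y$, $\Pr[R(x)\in Y]\le e^{\varepsilon}\Pr[R(x')\in Y]$. $\mathbf U$ is the uniform distribution on $[d]$; for $H\subseteq[d]$, $\mathbf U_H$ is the uniform distribution on $H$; $R(\mathbf U)$, $R(\mathbf U_H)$ are the distributions of $R(\hat x)$ for $\hat x\sim\mathbf U$, resp. $\hat x\sim\mathbf U_H$. For $H\subset[d]$ with $|H|=d/2$, a message $y$ is $v$-leaky with respect to $H,R$ if $\left|\ln\frac{\Pr[R(\mathbf U_H)=y]}{\Pr[R(\mathbf U)=y]}\right|>v$ (messages with $\Pr[R(\mathbf U)=y]=0$ are regarded as not leaky), and $\mathit{Leak}(v,H,R)$ is the set of $y\in\mathcal Y$ that are $v$-leaky with respect to $H,R$. *)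

theory Defs
  imports "HOL-Probability.Probability"
begin

text \<open>[d] is rendered as {1..d}. A randomizer R : [d] -> Y is a map nat => 'y pmf
  (only its values on {1..d} matter); 'y is a countable message type.\<close>

definition eps_private :: "real \<Rightarrow> nat \<Rightarrow> (nat \<Rightarrow> 'y::countable pmf) \<Rightarrow> bool" where
  "eps_private \<epsilon> d R \<longleftrightarrow>
     (\<forall>x\<in>{1..d}. \<forall>x'\<in>{1..d}. \<forall>Y.
        measure_pmf.prob (R x) Y \<le> exp \<epsilon> * measure_pmf.prob (R x') Y)"

text \<open>R(U_H): distribution of R(x) for x uniform on H; R(U) = R(U_{[d]}).\<close>
definition out_dist :: "(nat \<Rightarrow> 'y pmf) \<Rightarrow> nat set \<Rightarrow> 'y pmf" where
  "out_dist R H = bind_pmf (pmf_of_set H) R"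

text \<open>y is v-leaky wrt H,R: Pr[R(U)=y] > 0 and |ln(Pr[R(U_H)=y]/Pr[R(U)=y])| > v,
  where the log-ratio is +-infinity (hence leaky) when Pr[R(U_H)=y] = 0.\<close>
definition Leak :: "real \<Rightarrow> nat \<Rightarrow> nat set \<Rightarrow> (nat \<Rightarrow> 'y pmf) \<Rightarrow> 'y set" where
  "Leak v d H R = {y. pmf (out_dist R {1..d}) y > 0 \<and>
      (pmf (out_dist R H) y = 0 \<or>
       \<bar>ln (pmf (out_dist R H) y / pmf (out_dist R {1..d}) y)\<bar> > v)}"

end

theory Submission
  imports Defs "HOL-Combinatorics.Permutations"
begin

text \<open>Fix a message \<open>y\<close> and write \<open>p x = Pr[R(x) = y]\<close>. By privacy, any two values of
  \<open>p\<close> differ by at most \<open>e^(2\<epsilon>) - 1\<close> times their mean \<open>Pr[R(U) = y]\<close>, while \<open>y\<close> is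
  \<open>v\<close>-leaky for \<open>H\<close> only if the mean of \<open>p\<close> over \<open>H\<close> deviates from that mean by the
  relative amount \<open>1 - e^(-v)\<close>. For a uniform half \<open>H\<close> this has probability at most \<open>\<beta>\<close>:
  a uniform half is a uniformly permuted image of a set choosing one element from each pair
  \<open>{2j+1, 2j+2}\<close> by independent fair coins, and for each fixed permutation Hoeffding's
  inequality applies to the coins. Integrating over \<open>y\<close>, each \<open>R\<^sub>i\<close> leaks with expected
  probability at most \<open>\<beta>\<close> over \<open>H\<close>; Markov's inequality and a union bound over the \<open>n\<close>
  randomizers finish the proof.\<close>

lemma half_le_one_minus_exp_neg:
  fixes v :: real
  assumes "0 \<le> v" "v \<le> 1"
  shows "v / 2 \<le> 1 - exp (- v)"
proof -
  have "exp (- v) \<le> 1 / (1 + v)"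
    using exp_ge_add_one_self[of v] assms(1) by (simp add: exp_minus divide_right_mono inverse_eq_divide frac_le)
  also have "\<dots> \<le> 1 - v / 2"
  proof -
    have "v * v \<le> v" using assms by (simp add: mult_left_le)
    then show ?thesis using assms(1) by (simp add: field_simps)
  qed
  finally show ?thesis by simp
qed

lemma abs_ln_divide_le_if_close:
  fixes p q v :: real
  assumes "p > 0" "v \<ge> 0" "\<bar>q - p\<bar> < (1 - exp (- v)) * p"
  shows "q > 0" and "\<bar>ln (q / p)\<bar> \<le> v"
proof -
  have lower: "exp (- v) < q / p" and "q / p < 2 - exp (- v)"
    using assms by (auto simp: field_simps abs_less_iff)
  moreover have "2 - exp (- v) \<le> exp v"
    using exp_ge_add_one_self[of v] exp_ge_add_one_self[of "- v"] by linarith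
  ultimately have upper: "q / p < exp v" by linarith
  have "q / p > 0" using lower by (meson exp_gt_zero less_trans)
  then show "q > 0" using assms(1) by (simp add: zero_less_divide_iff)
  have "- v < ln (q / p)" and "ln (q / p) < v"
    using lower upper \<open>q / p > 0\<close> by (metis exp_gt_zero ln_exp ln_less_cancel_iff)+
  then show "\<bar>ln (q / p)\<bar> \<le> v" by simp
qed

lemma leak_threshold_bound:
  fixes \<epsilon> \<beta> :: real and d :: nat
  assumes "\<epsilon> > 0" "0 < \<beta>" "\<beta> < 1" "real d > 4 * (exp (2 * \<epsilon>) - 1)^2 * ln (2 / \<beta>)"
  defines "v \<equiv> (exp (2 * \<epsilon>) - 1) * sqrt (4 / real d * ln (2 / \<beta>))"
  shows "0 \<le> v" and "2 * exp (- real d * (1 - exp (- v))^2 / (exp (2 * \<epsilon>) - 1)^2) \<le> \<beta>"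
proof -
  define E L where "E = exp (2 * \<epsilon>) - 1" and "L = ln (2 / \<beta>)"
  have E: "E > 0" and L: "L > 0" using assms(1-3) by (simp_all add: E_def L_def)
  have d: "real d > 4 * E^2 * L" using assms(4) by (simp add: E_def L_def)
  moreover have "0 < 4 * E^2 * L" using E L by simp
  ultimately have "real d > 0" by linarith
  have v: "v = E * sqrt (4 / real d * L)" by (simp add: v_def E_def L_def)
  then show "0 \<le> v" using E L \<open>real d > 0\<close> by simp
  have v2: "v^2 * real d = 4 * E^2 * L"
    using \<open>real d > 0\<close> L by (simp add: v power_mult_distrib)
  then have "v^2 * real d < 1 * real d" using d by simp
  then have "v^2 < 1" using \<open>real d > 0\<close> by (simp only: mult_less_cancel_right_pos)
  then have "v \<le> 1" using \<open>0 \<le> v\<close> by (simp add: abs_square_less_1)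
  then have "(v / 2)^2 \<le> (1 - exp (- v))^2"
    using \<open>0 \<le> v\<close> half_le_one_minus_exp_neg[OF \<open>0 \<le> v\<close> \<open>v \<le> 1\<close>] by (intro power_mono) auto
  then have "real d * (v / 2)^2 \<le> real d * (1 - exp (- v))^2" by (simp add: mult_left_mono)
  moreover have "real d * (v / 2)^2 = E^2 * L" using v2 by (simp add: power_divide algebra_simps)
  ultimately have "E^2 * L \<le> real d * (1 - exp (- v))^2" by simp
  then have "L \<le> real d * (1 - exp (- v))^2 / E^2"
    using E by (simp add: pos_le_divide_eq mult.commute)
  then have "exp (- (real d * (1 - exp (- v))^2 / E^2)) \<le> exp (- L)" by simp
  also have "exp (- L) = \<beta> / 2" using assms(2) by (simp add: L_def exp_minus)
  finally show "2 * exp (- real d * (1 - exp (- v))^2 / (exp (2 * \<epsilon>) - 1)^2) \<le> \<beta>"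
    by (simp add: E_def)
qed

subsection \<open>Uniform subsets as permuted images\<close>

lemma exists_permutes_image_eq:
  assumes "finite D" "T \<subseteq> D" "T' \<subseteq> D" "card T = card T'"
  obtains \<tau> where "\<tau> permutes D" "\<tau> ` T = T'"
proof -
  have fin: "finite T" "finite T'" "finite (D - T)" "finite (D - T')"
    using assms by (auto intro: finite_subset)
  obtain f where f: "bij_betw f T T'" using finite_same_card_bij[OF fin(1,2) assms(4)] by blast
  have "card (D - T) = card (D - T')" using assms fin by (simp add: card_Diff_subset)
  then obtain g where g: "bij_betw g (D - T) (D - T')" using finite_same_card_bij[OF fin(3,4)] by blast
  define \<tau> where "\<tau> x = (if x \<in> T then f x else if x \<in> D then g x else x)" for x
  have "bij_betw \<tau> T T'" using f by (rule bij_betw_cong[THEN iffD1, rotated]) (simp add: \<tau>_def)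
  moreover have "bij_betw \<tau> (D - T) (D - T')"
    using g by (rule bij_betw_cong[THEN iffD1, rotated]) (simp add: \<tau>_def)
  ultimately have "bij_betw \<tau> (T \<union> (D - T)) (T' \<union> (D - T'))" by (rule bij_betw_combine) auto
  then have "\<tau> permutes D" using assms(2,3) by (intro bij_imp_permutes) (auto simp: \<tau>_def Un_absorb1)
  moreover have "\<tau> ` T = T'" using \<open>bij_betw \<tau> T T'\<close> by (simp add: bij_betw_def)
  ultimately show thesis by (rule that)
qed

lemma permutes_image_k_subset:
  assumes "\<pi> permutes D" "H \<in> {H. H \<subseteq> D \<and> card H = m}"
  shows "\<pi> ` H \<in> {H. H \<subseteq> D \<and> card H = m}"
proof -
  have "\<pi> ` H \<subseteq> D" using assms permutes_in_image by fastforce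
  moreover have "card (\<pi> ` H) = card H"
    using permutes_inj[OF assms(1)] by (simp add: card_image inj_on_subset)
  ultimately show ?thesis using assms(2) by simp
qed

lemma bij_betw_permutes_image_k_subsets:
  assumes "\<pi> permutes D"
  shows "bij_betw ((`) \<pi>) {H. H \<subseteq> D \<and> card H = m} {H. H \<subseteq> D \<and> card H = m}"
proof (rule bij_betw_byWitness[where f' = "(`) (inv \<pi>)"])
  show "\<forall>H\<in>{H. H \<subseteq> D \<and> card H = m}. inv \<pi> ` \<pi> ` H = H"
    "\<forall>H\<in>{H. H \<subseteq> D \<and> card H = m}. \<pi> ` inv \<pi> ` H = H"
    by (simp_all add: image_comp permutes_inv_o[OF assms])
  show "(`) \<pi> ` {H. H \<subseteq> D \<and> card H = m} \<subseteq> {H. H \<subseteq> D \<and> card H = m}"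
    "(`) (inv \<pi>) ` {H. H \<subseteq> D \<and> card H = m} \<subseteq> {H. H \<subseteq> D \<and> card H = m}"
    using permutes_image_k_subset[OF assms] permutes_image_k_subset[OF permutes_inv[OF assms]]
    by blast+
qed

lemma sum_k_subsets_eq_sum_permutations:
  fixes f :: "'a set \<Rightarrow> real" and D :: "'a set" and m :: nat
  defines "S \<equiv> {H. H \<subseteq> D \<and> card H = m}"
  assumes "finite D" "T \<in> S"
  shows "real (card {\<pi>. \<pi> permutes D}) * (\<Sum>H\<in>S. f H)
       = real (card S) * (\<Sum>\<pi> | \<pi> permutes D. f (\<pi> ` T))"
proof -
  let ?P = "{\<pi>. \<pi> permutes D}"
  have orbit_const: "(\<Sum>\<pi>\<in>?P. f (\<pi> ` T')) = (\<Sum>\<pi>\<in>?P. f (\<pi> ` T))" if "T' \<in> S" for T'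
  proof -
    have "T \<subseteq> D" "T' \<subseteq> D" "card T = card T'" using \<open>T \<in> S\<close> that by (auto simp: S_def)
    then obtain \<tau> where \<tau>: "\<tau> permutes D" "\<tau> ` T = T'"
      using exists_permutes_image_eq[OF \<open>finite D\<close>] by metis
    have "(\<Sum>\<pi>\<in>?P. f (\<pi> ` T)) = (\<Sum>\<pi>\<in>?P. f ((\<pi> \<circ> \<tau>) ` T))"
      by (rule sum_permutations_compose_right[OF \<tau>(1)])
    also have "\<dots> = (\<Sum>\<pi>\<in>?P. f (\<pi> ` T'))" unfolding \<tau>(2)[symmetric] by (simp add: image_image)
    finally show ?thesis ..
  qed
  have "real (card ?P) * (\<Sum>H\<in>S. f H) = (\<Sum>\<pi>\<in>?P. \<Sum>H\<in>S. f (\<pi> ` H))"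
    by (simp add: S_def sum.reindex_bij_betw[OF bij_betw_permutes_image_k_subsets])
  also have "\<dots> = (\<Sum>H\<in>S. \<Sum>\<pi>\<in>?P. f (\<pi> ` H))" by (rule sum.swap)
  also have "\<dots> = real (card S) * (\<Sum>\<pi>\<in>?P. f (\<pi> ` T))" by (simp add: orbit_const)
  finally show ?thesis .
qed

lemma prob_uniform_k_subset_le_by_symmetrization:
  fixes M :: "'a set pmf" and D :: "'a set" and m :: nat and Q :: "'a set \<Rightarrow> bool"
  defines "S \<equiv> {H. H \<subseteq> D \<and> card H = m}"
  assumes "finite D" "set_pmf M \<subseteq> S"
    and bound: "\<And>\<pi>. \<pi> permutes D \<Longrightarrow> measure_pmf.prob M {T. Q (\<pi> ` T)} \<le> \<beta>"
  shows "measure_pmf.prob (pmf_of_set S) {H. Q H} \<le> \<beta>"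
proof -
  let ?P = "{\<pi>. \<pi> permutes D}"
  have "finite S" unfolding S_def using \<open>finite D\<close> by (auto intro: finite_subset[of _ "Pow D"])
  have "S \<noteq> {}" using assms(3) set_pmf_not_empty[of M] by blast
  have "card ?P > 0"
    using \<open>finite D\<close> finite_permutations[of D] permutes_id[of D] card_gt_0_iff by blast
  have orbit: "real (card S) * (\<Sum>\<pi>\<in>?P. indicator {T. Q (\<pi> ` T)} T) = real (card ?P) * card (S \<inter> {H. Q H})"
    if "T \<in> set_pmf M" for T
    using sum_k_subsets_eq_sum_permutations[where f = "indicator {H. Q H}" and D = D and m = m and T = T]
      that assms(2,3) \<open>finite S\<close>
    by (auto simp: S_def sum_indicator_eq_card indicator_def)
  have "integrable M (indicator A :: _ \<Rightarrow> real)" for A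
    by (rule measure_pmf.integrable_const_bound[where B = 1]) auto
  then have "real (card S) * (\<Sum>\<pi>\<in>?P. measure_pmf.prob M {T. Q (\<pi> ` T)})
      = measure_pmf.expectation M (\<lambda>T. real (card S) * (\<Sum>\<pi>\<in>?P. indicator {T. Q (\<pi> ` T)} T))"
    by (simp add: integral_sum)
  also have "\<dots> = real (card ?P) * card (S \<inter> {H. Q H})"
    by (subst integral_cong_AE[where g = "\<lambda>_. real (card ?P) * card (S \<inter> {H. Q H})"])
       (auto simp: orbit intro!: AE_pmfI)
  finally have "real (card ?P) * card (S \<inter> {H. Q H}) \<le> real (card S) * (real (card ?P) * \<beta>)"
    using bound sum_bounded_above[of ?P "\<lambda>\<pi>. measure_pmf.prob M {T. Q (\<pi> ` T)}" \<beta>]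
    by (metis mult_left_mono of_nat_0_le_iff mem_Collect_eq)
  then have "card (S \<inter> {H. Q H}) \<le> \<beta> * card S" using \<open>card ?P > 0\<close> by (simp add: mult_ac)
  then show ?thesis
    using \<open>finite S\<close> \<open>S \<noteq> {}\<close> by (simp add: measure_pmf_of_set pos_divide_le_eq card_gt_0_iff)
qed

subsection \<open>Concentration for a uniform half\<close>

definition pair_choice :: "nat \<Rightarrow> (nat \<Rightarrow> bool) \<Rightarrow> nat set" where
  "pair_choice k s = (\<lambda>j. if s j then 2 * j + 1 else 2 * j + 2) ` {..<k}"

definition random_pair_choice :: "nat \<Rightarrow> nat set pmf" where
  "random_pair_choice k = map_pmf (pair_choice k) (Pi_pmf {..<k} False (\<lambda>_. bernoulli_pmf (1 / 2)))"

lemma inj_on_pair_choice_index: "inj_on (\<lambda>j. if s j then 2 * j + 1 else 2 * j + (2::nat)) A"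
  by (auto simp: inj_on_def split: if_splits)

lemma pair_choice_k_subset: "pair_choice k s \<in> {H. H \<subseteq> {1..2 * k} \<and> card H = k}"
  using card_image[OF inj_on_pair_choice_index] by (auto simp: pair_choice_def)

lemma sum_pair_choice:
  "sum g (pair_choice k s) = (\<Sum>j<k. if s j then g (2 * j + 1) else g (2 * j + 2))"
  unfolding pair_choice_def by (subst sum.reindex[OF inj_on_pair_choice_index]) (simp add: if_distrib)

lemma sum_atLeastAtMost_double:
  fixes g :: "nat \<Rightarrow> 'a::comm_monoid_add"
  shows "sum g {1..2 * k} = (\<Sum>j<k. g (2 * j + 1) + g (2 * j + 2))"
proof (induction k)
  case (Suc k)
  have "{1..2 * Suc k} = insert (2 * k + 2) (insert (2 * k + 1) {1..2 * k})" by auto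
  then show ?case using Suc by (simp add: ac_simps)
qed simp

lemma Hoeffding_choose_from_pairs:
  fixes a b :: "nat \<Rightarrow> real" and w t :: real
  assumes "k > 0" "w > 0" "t \<ge> 0" and ab: "\<And>j. j < k \<Longrightarrow> \<bar>a j - b j\<bar> \<le> w"
  shows "measure_pmf.prob (Pi_pmf {..<k} False (\<lambda>_. bernoulli_pmf (1 / 2)))
     {s. t \<le> \<bar>(\<Sum>j<k. if s j then a j else b j) - (\<Sum>j<k. (a j + b j) / 2)\<bar>}
      \<le> 2 * exp (- 2 * t^2 / (real k * w^2))"
proof -
  define M where "M = Pi_pmf {..<k} False (\<lambda>_. bernoulli_pmf (1 / 2))"
  define X where "X j s = (if s j then a j else b j)" for j and s :: "nat \<Rightarrow> bool"
  define lo hi where "lo j = (a j + b j) / 2 - w / 2" and "hi j = (a j + b j) / 2 + w / 2" for j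
  have "measure_pmf.expectation M (X j) = (a j + b j) / 2" if "j < k" for j
  proof -
    have "measure_pmf.expectation M (X j)
        = measure_pmf.expectation (map_pmf (\<lambda>f. f j) M) (\<lambda>c. if c then a j else b j)"
      by (simp add: X_def[abs_def])
    also have "map_pmf (\<lambda>f. f j) M = bernoulli_pmf (1 / 2)"
      unfolding M_def using that by (subst Pi_pmf_component) auto
    finally show ?thesis by simp
  qed
  then have mean: "(\<Sum>j<k. (a j + b j) / 2) = (\<Sum>j<k. measure_pmf.expectation M (X j))"
    by (intro sum.cong) auto
  interpret Hoeffding_ineq "measure_pmf M" "{..<k}" X lo hi "\<Sum>j<k. (a j + b j) / 2"
  proof unfold_locales
    show "prob_space.indep_vars (measure_pmf M) (\<lambda>_. borel) X {..<k}"
      unfolding M_def X_def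
      by (intro prob_space.indep_vars_compose2[OF _ indep_vars_Pi_pmf])
         (auto simp: measure_pmf.prob_space_axioms)
    show "AE x in measure_pmf M. X j x \<in> {lo j..hi j}" if "j \<in> {..<k}" for j
      using ab[of j] that by (intro AE_I2) (auto simp: X_def lo_def hi_def abs_le_iff field_simps)
  qed (simp_all add: mean)
  have "(\<Sum>j<k. (hi j - lo j)^2) = real k * w^2" by (simp add: hi_def lo_def)
  moreover have "measure_pmf.prob M {s \<in> space (measure_pmf M). \<bar>(\<Sum>j<k. X j s) - (\<Sum>j<k. (a j + b j) / 2)\<bar> \<ge> t}
        \<le> 2 * exp (-2 * t^2 / (\<Sum>j<k. (hi j - lo j)^2))"
    using assms by (intro Hoeffding_ineq_abs_ge) (auto simp: hi_def lo_def)
  ultimately show ?thesis by (simp add: M_def X_def)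
qed

lemma prob_pair_choice_deviation_le:
  fixes g :: "nat \<Rightarrow> real"
  assumes "k > 0" "w > 0" "t \<ge> 0"
    and spread: "\<And>x x'. x \<in> {1..2 * k} \<Longrightarrow> x' \<in> {1..2 * k} \<Longrightarrow> \<bar>g x - g x'\<bar> \<le> w"
  shows "measure_pmf.prob (random_pair_choice k) {T. t \<le> \<bar>sum g T - sum g {1..2 * k} / 2\<bar>}
           \<le> 2 * exp (- 2 * t^2 / (real k * w^2))"
proof -
  have "sum g {1..2 * k} / 2 = (\<Sum>j<k. (g (2 * j + 1) + g (2 * j + 2)) / 2)"
    by (simp only: sum_atLeastAtMost_double sum_divide_distrib)
  then have "measure_pmf.prob (random_pair_choice k) {T. t \<le> \<bar>sum g T - sum g {1..2 * k} / 2\<bar>}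
    = measure_pmf.prob (Pi_pmf {..<k} False (\<lambda>_. bernoulli_pmf (1 / 2)))
        {s. t \<le> \<bar>(\<Sum>j<k. if s j then g (2 * j + 1) else g (2 * j + 2))
                  - (\<Sum>j<k. (g (2 * j + 1) + g (2 * j + 2)) / 2)\<bar>}"
    by (simp add: random_pair_choice_def sum_pair_choice vimage_def)
  also have "\<dots> \<le> 2 * exp (- 2 * t^2 / (real k * w^2))"
    using assms by (intro Hoeffding_choose_from_pairs) auto
  finally show ?thesis .
qed

lemma prob_half_subset_sum_deviation_le:
  fixes g :: "nat \<Rightarrow> real"
  assumes "k > 0" "w > 0" "t \<ge> 0"
    and spread: "\<And>x x'. x \<in> {1..2 * k} \<Longrightarrow> x' \<in> {1..2 * k} \<Longrightarrow> \<bar>g x - g x'\<bar> \<le> w"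
  shows "measure_pmf.prob (pmf_of_set {H. H \<subseteq> {1..2 * k} \<and> card H = k})
           {H. t \<le> \<bar>sum g H - sum g {1..2 * k} / 2\<bar>} \<le> 2 * exp (- 2 * t^2 / (real k * w^2))"
proof (rule prob_uniform_k_subset_le_by_symmetrization)
  show "set_pmf (random_pair_choice k) \<subseteq> {H. H \<subseteq> {1..2 * k} \<and> card H = k}"
    using pair_choice_k_subset by (auto simp: random_pair_choice_def)
  fix \<pi> assume \<pi>: "\<pi> permutes {1..2 * k}"
  have "sum g (\<pi> ` T) = sum (g \<circ> \<pi>) T" for T
    using permutes_inj[OF \<pi>] by (simp add: sum.reindex inj_on_subset)
  moreover have "sum g {1..2 * k} = sum (g \<circ> \<pi>) {1..2 * k}" by (rule sum.permute[OF \<pi>])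
  moreover have "measure_pmf.prob (random_pair_choice k)
      {T. t \<le> \<bar>sum (g \<circ> \<pi>) T - sum (g \<circ> \<pi>) {1..2 * k} / 2\<bar>} \<le> 2 * exp (- 2 * t^2 / (real k * w^2))"
    using assms permutes_in_image[OF \<pi>] by (intro prob_pair_choice_deviation_le) auto
  ultimately show "measure_pmf.prob (random_pair_choice k)
      {T. t \<le> \<bar>sum g (\<pi> ` T) - sum g {1..2 * k} / 2\<bar>} \<le> 2 * exp (- 2 * t^2 / (real k * w^2))"
    by simp
qed simp

subsection \<open>Leaky messages\<close>

lemma pmf_out_dist:
  assumes "finite H" "H \<noteq> {}"
  shows "pmf (out_dist R H) y = (\<Sum>x\<in>H. pmf (R x) y) / card H"
  using assms by (simp add: out_dist_def pmf_bind integral_pmf_of_set)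

lemma Leak_imp_far_from_uniform:
  assumes "y \<in> Leak v d H R" "0 \<le> v"
  shows "(1 - exp (- v)) * pmf (out_dist R {1..d}) y \<le> \<bar>pmf (out_dist R H) y - pmf (out_dist R {1..d}) y\<bar>"
  using assms abs_ln_divide_le_if_close[of "pmf (out_dist R {1..d}) y" v "pmf (out_dist R H) y"]
  by (force simp: Leak_def not_le)

lemma spread_le_private_average:
  fixes p :: "'a \<Rightarrow> real"
  assumes "finite D" "x \<in> D" "x' \<in> D" "0 \<le> \<epsilon>" "\<forall>z\<in>D. 0 \<le> p z"
    and priv: "\<forall>z\<in>D. \<forall>z'\<in>D. p z \<le> exp \<epsilon> * p z'"
  shows "\<bar>p x - p x'\<bar> \<le> (exp (2 * \<epsilon>) - 1) * (sum p D / card D)"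
proof -
  define a where "a = sum p D / card D"
  have "D \<noteq> {}" using assms(2) by auto
  have a: "0 \<le> a" using assms(5) by (simp add: a_def sum_nonneg)
  have upper: "p z \<le> exp \<epsilon> * a" if "z \<in> D" for z
  proof -
    have "real (card D) * p z \<le> (\<Sum>z'\<in>D. exp \<epsilon> * p z')"
      using sum_mono[of D "\<lambda>_. p z" "\<lambda>z'. exp \<epsilon> * p z'"] priv that by auto
    moreover have "card D > 0" using \<open>finite D\<close> \<open>D \<noteq> {}\<close> by (simp add: card_gt_0_iff)
    ultimately have "p z \<le> (\<Sum>z'\<in>D. exp \<epsilon> * p z') / card D"
      by (simp add: pos_le_divide_eq mult.commute)
    then show ?thesis by (simp add: a_def sum_distrib_left)
  qed
  have "p z - p z' \<le> (exp (2 * \<epsilon>) - 1) * a" if "z \<in> D" "z' \<in> D" for z z'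
  proof -
    have "p z - p z' \<le> (exp \<epsilon> - 1) * p z'" using priv that by (simp add: algebra_simps)
    also have "\<dots> \<le> (exp \<epsilon> - 1) * (exp \<epsilon> * a)"
      using upper[OF that(2)] assms(4) by (intro mult_left_mono) auto
    also have "\<dots> = (exp (2 * \<epsilon>) - 1) * a - (exp \<epsilon> - 1) * a"
      by (simp add: algebra_simps mult_exp_exp)
    also have "\<dots> \<le> (exp (2 * \<epsilon>) - 1) * a" using a assms(4) by simp
    finally show ?thesis .
  qed
  then show ?thesis using assms(2,3) by (simp add: a_def abs_le_iff)
qed

lemma eps_private_pmf_spread:
  assumes "eps_private \<epsilon> d R" "0 \<le> \<epsilon>" "x \<in> {1..d}" "x' \<in> {1..d}"
  shows "\<bar>pmf (R x) y - pmf (R x') y\<bar> \<le> (exp (2 * \<epsilon>) - 1) * pmf (out_dist R {1..d}) y"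
proof -
  have "\<forall>z\<in>{1..d}. \<forall>z'\<in>{1..d}. pmf (R z) y \<le> exp \<epsilon> * pmf (R z') y"
    using assms(1) unfolding eps_private_def by (metis measure_pmf_single)
  then show ?thesis
    using spread_le_private_average[of "{1..d}" x x' \<epsilon> "\<lambda>z. pmf (R z) y"] assms(2-4)
    by (auto simp: pmf_out_dist)
qed

lemma Leak_imp_half_sum_deviation:
  assumes "y \<in> Leak v (2 * k) H R" "0 \<le> v" "H \<subseteq> {1..2 * k}" "card H = k" "k > 0"
  shows "real k * (1 - exp (- v)) * pmf (out_dist R {1..2 * k}) y
           \<le> \<bar>(\<Sum>x\<in>H. pmf (R x) y) - (\<Sum>x\<in>{1..2 * k}. pmf (R x) y) / 2\<bar>"
proof -
  define a where "a = pmf (out_dist R {1..2 * k}) y"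
  have "finite H" "H \<noteq> {}" using assms(3-5) by (auto intro: finite_subset)
  then have "pmf (out_dist R H) y = (\<Sum>x\<in>H. pmf (R x) y) / k" by (simp add: pmf_out_dist assms(4))
  then have "(1 - exp (- v)) * a \<le> \<bar>(\<Sum>x\<in>H. pmf (R x) y) / k - a\<bar>"
    using Leak_imp_far_from_uniform[OF assms(1,2)] by (simp add: a_def)
  moreover have "(\<Sum>x\<in>H. pmf (R x) y) - (\<Sum>x\<in>{1..2 * k}. pmf (R x) y) / 2
      = k * ((\<Sum>x\<in>H. pmf (R x) y) / k - a)"
    using \<open>k > 0\<close> by (simp add: a_def pmf_out_dist field_simps)
  ultimately show ?thesis
    using \<open>k > 0\<close> by (simp add: a_def abs_mult mult_left_mono mult.assoc)
qed

lemma prob_Leak_member_le: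
  fixes R :: "nat \<Rightarrow> 'y::countable pmf"
  assumes "\<epsilon> > 0" "k > 0" "0 \<le> v" "eps_private \<epsilon> (2 * k) R"
  shows "measure_pmf.prob (pmf_of_set {H. H \<subseteq> {1..2 * k} \<and> card H = k}) {H. y \<in> Leak v (2 * k) H R}
           \<le> 2 * exp (- 2 * real k * (1 - exp (- v))^2 / (exp (2 * \<epsilon>) - 1)^2)"
proof -
  define S where "S = {H. H \<subseteq> {1..2 * k} \<and> card H = k}"
  define p where "p x = pmf (R x) y" for x
  define a where "a = pmf (out_dist R {1..2 * k}) y"
  define u E where "u = 1 - exp (- v)" and "E = exp (2 * \<epsilon>) - 1"
  show ?thesis
  proof (cases "a = 0")
    case True
    then show ?thesis by (simp add: Leak_def a_def)
  next
    case False
    then have "a > 0" "E > 0" "0 \<le> u" using \<open>\<epsilon> > 0\<close> \<open>0 \<le> v\<close> by (simp_all add: a_def E_def u_def)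
    have "finite S" "S \<noteq> {}"
      unfolding S_def by (auto intro!: exI[of _ "{1..k}"] finite_subset[of _ "Pow {1..2 * k}"])
    have "{H. y \<in> Leak v (2 * k) H R} \<inter> S \<subseteq> {H. k * u * a \<le> \<bar>sum p H - sum p {1..2 * k} / 2\<bar>}"
    proof
      fix H assume "H \<in> {H. y \<in> Leak v (2 * k) H R} \<inter> S"
      then have "y \<in> Leak v (2 * k) H R" "H \<subseteq> {1..2 * k}" "card H = k" by (auto simp: S_def)
      then show "H \<in> {H. k * u * a \<le> \<bar>sum p H - sum p {1..2 * k} / 2\<bar>}"
        using Leak_imp_half_sum_deviation[OF _ \<open>0 \<le> v\<close> _ _ \<open>k > 0\<close>] by (simp add: p_def u_def a_def)
    qed
    then have "measure_pmf.prob (pmf_of_set S) ({H. y \<in> Leak v (2 * k) H R} \<inter> S)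
        \<le> measure_pmf.prob (pmf_of_set S) {H. k * u * a \<le> \<bar>sum p H - sum p {1..2 * k} / 2\<bar>}"
      by (rule measure_pmf.finite_measure_mono) simp
    then have "measure_pmf.prob (pmf_of_set S) {H. y \<in> Leak v (2 * k) H R}
        \<le> measure_pmf.prob (pmf_of_set S) {H. k * u * a \<le> \<bar>sum p H - sum p {1..2 * k} / 2\<bar>}"
      using measure_Int_set_pmf[where p = "pmf_of_set S" and A = "{H. y \<in> Leak v (2 * k) H R}"]
        \<open>finite S\<close> \<open>S \<noteq> {}\<close> by simp
    also have "\<dots> \<le> 2 * exp (- 2 * (k * u * a)^2 / (real k * (E * a)^2))"
    proof (rule prob_half_subset_sum_deviation_le[of k, folded S_def])
      show "0 < k" "0 < E * a" "0 \<le> real k * u * a" using \<open>k > 0\<close> \<open>a > 0\<close> \<open>E > 0\<close> \<open>0 \<le> u\<close> by simp_all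
      show "\<bar>p x - p x'\<bar> \<le> E * a" if "x \<in> {1..2 * k}" "x' \<in> {1..2 * k}" for x x'
        using eps_private_pmf_spread[OF assms(4) _ that] \<open>\<epsilon> > 0\<close> by (simp add: p_def a_def E_def)
    qed
    also have "- 2 * (k * u * a)^2 / (real k * (E * a)^2) = - 2 * real k * u^2 / E^2"
      using \<open>k > 0\<close> \<open>a > 0\<close> \<open>E > 0\<close> by (simp add: power_mult_distrib power2_eq_square)
    finally show ?thesis by (simp add: S_def u_def E_def)
  qed
qed

subsection \<open>Averaging over messages and randomizers\<close>

lemma expectation_measure_le_of_pointwise:
  fixes L :: "'b \<Rightarrow> 'a set" and \<mu> :: "'a pmf"
  assumes "finite S" "S \<noteq> {}" and pointwise: "\<And>y. measure_pmf.prob (pmf_of_set S) {H. y \<in> L H} \<le> b"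
  shows "measure_pmf.expectation (pmf_of_set S) (\<lambda>H. measure_pmf.prob \<mu> (L H)) \<le> b"
proof -
  have int: "integrable \<mu> (indicator A :: _ \<Rightarrow> real)" for A
    by (rule measure_pmf.integrable_const_bound[where B = 1]) auto
  have "measure_pmf.expectation (pmf_of_set S) (\<lambda>H. measure_pmf.prob \<mu> (L H))
      = measure_pmf.expectation \<mu> (\<lambda>y. (\<Sum>H\<in>S. indicator (L H) y) / card S)"
    using assms(1,2) int by (simp add: integral_pmf_of_set integral_sum)
  also have "\<dots> = measure_pmf.expectation \<mu> (\<lambda>y. measure_pmf.prob (pmf_of_set S) {H. y \<in> L H})"
    using assms(1,2) by (simp add: measure_pmf_of_set sum_indicator_eq_card indicator_def)
  also have "\<dots> \<le> b"
    using pointwise by (intro measure_pmf.integral_le_const AE_I2 measure_pmf.integrable_const_bound[where B = 1]) auto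
  finally show ?thesis .
qed

lemma prob_all_less_ge:
  fixes M :: "'a pmf" and X :: "'i \<Rightarrow> 'a \<Rightarrow> real"
  assumes "finite I" "c > 0"
    and "\<And>i. i \<in> I \<Longrightarrow> integrable M (X i)" "\<And>i x. i \<in> I \<Longrightarrow> 0 \<le> X i x"
    and "\<And>i. i \<in> I \<Longrightarrow> measure_pmf.expectation M (X i) \<le> e"
  shows "1 - real (card I) * e / c \<le> measure_pmf.prob M {x. \<forall>i\<in>I. X i x < c}"
proof -
  have "measure_pmf.prob M (\<Union>i\<in>I. {x. c \<le> X i x}) \<le> (\<Sum>i\<in>I. measure_pmf.prob M {x. c \<le> X i x})"
    by (rule measure_pmf.finite_measure_subadditive_finite) (auto simp: assms)
  also have "\<dots> \<le> (\<Sum>i\<in>I. e / c)"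
  proof (rule sum_mono)
    fix i assume "i \<in> I"
    then have "measure_pmf.prob M {x. c \<le> X i x} \<le> measure_pmf.expectation M (X i) / c"
      using integral_Markov_inequality_measure[of M "X i"] assms by auto
    also have "\<dots> \<le> e / c" using assms \<open>i \<in> I\<close> by (simp add: divide_right_mono)
    finally show "measure_pmf.prob M {x. c \<le> X i x} \<le> e / c" .
  qed
  also have "\<dots> = real (card I) * e / c" by simp
  finally have "measure_pmf.prob M (\<Union>i\<in>I. {x. c \<le> X i x}) \<le> real (card I) * e / c" .
  moreover have "{x. \<forall>i\<in>I. X i x < c} = space M - (\<Union>i\<in>I. {x. c \<le> X i x})" by auto
  ultimately show ?thesis
    using measure_pmf.prob_compl[where M = M and A = "\<Union>i\<in>I. {x. c \<le> X i x}"] by simp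
qed

theorem mainTheorem7:
  fixes \<epsilon> \<beta> :: real and d n :: nat and R :: "nat \<Rightarrow> nat \<Rightarrow> 'y::countable pmf"
  assumes "\<epsilon> > 0" and "0 < \<beta>" and "\<beta> < 1"
    and "even d"
    and "real d > 4 * (exp (2 * \<epsilon>) - 1)^2 * ln (2 / \<beta>)"
    and "\<forall>i\<in>{1..n}. eps_private \<epsilon> d (R i)"
  shows "measure_pmf.prob (pmf_of_set {H. H \<subseteq> {1..d} \<and> card H = d div 2})
           {H. \<forall>i\<in>{1..n}.
              measure_pmf.prob (out_dist (R i) {1..d})
                (Leak ((exp (2 * \<epsilon>) - 1) * sqrt (4 / real d * ln (2 / \<beta>))) d H (R i))
              < 6 * \<beta> * real n}
         \<ge> 5 / 6"
proof -
  obtain k where d: "d = 2 * k" using \<open>even d\<close> by blast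
  define v where "v = (exp (2 * \<epsilon>) - 1) * sqrt (4 / real d * ln (2 / \<beta>))"
  define S where "S = {H. H \<subseteq> {1..d} \<and> card H = d div 2}"
  have "0 < 4 * (exp (2 * \<epsilon>) - 1)^2 * ln (2 / \<beta>)" using assms(1-3) by simp
  then have "k > 0" using assms(5) d by simp
  have "finite S" "S \<noteq> {}"
    unfolding S_def by (auto intro!: exI[of _ "{1..d div 2}"] finite_subset[of _ "Pow {1..d}"])
  have "0 \<le> v" and small: "2 * exp (- real d * (1 - exp (- v))^2 / (exp (2 * \<epsilon>) - 1)^2) \<le> \<beta>"
    using leak_threshold_bound[OF assms(1-3,5)] by (simp_all add: v_def)
  have expect: "measure_pmf.expectation (pmf_of_set S)
      (\<lambda>H. measure_pmf.prob (out_dist (R i) {1..d}) (Leak v d H (R i))) \<le> \<beta>" if "i \<in> {1..n}" for i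
  proof (rule expectation_measure_le_of_pointwise[OF \<open>finite S\<close> \<open>S \<noteq> {}\<close>])
    fix y show "measure_pmf.prob (pmf_of_set S) {H. y \<in> Leak v d H (R i)} \<le> \<beta>"
      using prob_Leak_member_le[OF assms(1) \<open>k > 0\<close> \<open>0 \<le> v\<close>, of "R i" y] assms(6) that small
      by (simp add: S_def d)
  qed
  show ?thesis
  proof (cases "n = 0")
    case False
    have "1 - real (card {1..n}) * \<beta> / (6 * \<beta> * real n) \<le> measure_pmf.prob (pmf_of_set S)
        {H. \<forall>i\<in>{1..n}. measure_pmf.prob (out_dist (R i) {1..d}) (Leak v d H (R i)) < 6 * \<beta> * real n}"
      using \<open>finite S\<close> \<open>S \<noteq> {}\<close> False assms(2) expect
      by (intro prob_all_less_ge integrable_measure_pmf_finite) auto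
    then show ?thesis using False assms(2) by (simp add: S_def v_def)
  qed simp
qed

end
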